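(* Let $U$ be a nonempty finite set, $R\subseteq U\times U$ serial and transitive, and let $h_1$ be the height function of the closed-set lattice $\mathcal{L}(M(Reg(U,R)))$. Then for every $X\in Reg(U,R)$ (which is a closed set of $M(Reg(U,R))$), $h(X)=h_1(X)$.
   Context: $R_s(x)=\{y\in U\mid xRy\}$; $\underline{R}(X)=\{x\mid R_s(x)\subseteq X\}$, $\overline{R}(X)=\{x\mid R_s(x)\cap X\neq\emptyset\}$; $X$ is regular if $X=\underline{R}(\overline{R}(X))$, and $Reg(U,R)$ is the lattice of regular sets under inclusion, with least element $\emptyset$. $h(A)$ is the length of a maximal chain in $[\emptyset,A]$ within $Reg(U,R)$. $M(Reg(U,R))$ is the matroid on $U$ with independent sets $\{X\subseteq U\mid h(Y)\ge|X\cap Y|\ \forall Y\in Reg(U,R)\}$, rank function $r(X)=\max\{|I|\mid I\subseteq X \text{ independent}\}$, closure operator $cl(X)=\{u\in U\mid r(X\cup\{u\})=r(X)\}$; a set $X$ is closed if $cl(X)=X$. $\mathcal{L}(M)$ is the lattice of closed sets of $M$ under inclusion (join $cl(X\cup Y)$, meet $X\cap Y$), whose least element is $cl(\emptyset)$; $h_1(X)$ is the length of a maximal chain from the least element to $X$ in $\mathcal{L}(M)$. *)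

theory Defs
  imports Main
begin

definition succ_set :: "'a set \<Rightarrow> ('a \<times> 'a) set \<Rightarrow> 'a \<Rightarrow> 'a set" where
  "succ_set U R x = {y \<in> U. (x, y) \<in> R}"

definition lower_approx :: "'a set \<Rightarrow> ('a \<times> 'a) set \<Rightarrow> 'a set \<Rightarrow> 'a set" where
  "lower_approx U R X = {x \<in> U. succ_set U R x \<subseteq> X}"

definition upper_approx :: "'a set \<Rightarrow> ('a \<times> 'a) set \<Rightarrow> 'a set \<Rightarrow> 'a set" where
  "upper_approx U R X = {x \<in> U. succ_set U R x \<inter> X \<noteq> {}}"

definition serial_on :: "'a set \<Rightarrow> ('a \<times> 'a) set \<Rightarrow> bool" where
  "serial_on U R \<longleftrightarrow> (\<forall>x\<in>U. \<exists>y\<in>U. (x, y) \<in> R)"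

definition Reg :: "'a set \<Rightarrow> ('a \<times> 'a) set \<Rightarrow> 'a set set" where
  "Reg U R = {X. X \<subseteq> U \<and> X = lower_approx U R (upper_approx U R X)}"

definition chain_from_to :: "'b set set \<Rightarrow> 'b set \<Rightarrow> 'b set \<Rightarrow> 'b set list \<Rightarrow> bool" where
  "chain_from_to P b a cs \<longleftrightarrow> cs \<noteq> [] \<and> set cs \<subseteq> P \<and> sorted_wrt (\<subset>) cs
      \<and> hd cs = b \<and> last cs = a"

definition height_in :: "'b set set \<Rightarrow> 'b set \<Rightarrow> 'b set \<Rightarrow> nat" where
  "height_in P b a = Max {length cs - 1 | cs. chain_from_to P b a cs}"

definition hReg :: "'a set \<Rightarrow> ('a \<times> 'a) set \<Rightarrow> 'a set \<Rightarrow> nat" where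
  "hReg U R A = height_in (Reg U R) {} A"

definition indepM :: "'a set \<Rightarrow> ('a \<times> 'a) set \<Rightarrow> 'a set \<Rightarrow> bool" where
  "indepM U R X \<longleftrightarrow> X \<subseteq> U \<and> (\<forall>Y \<in> Reg U R. card (X \<inter> Y) \<le> hReg U R Y)"

definition rankM :: "'a set \<Rightarrow> ('a \<times> 'a) set \<Rightarrow> 'a set \<Rightarrow> nat" where
  "rankM U R X = Max {card I | I. I \<subseteq> X \<and> indepM U R I}"

definition clM :: "'a set \<Rightarrow> ('a \<times> 'a) set \<Rightarrow> 'a set \<Rightarrow> 'a set" where
  "clM U R X = {u \<in> U. rankM U R (X \<union> {u}) = rankM U R X}"

(* closed sets of M, i.e. the carrier of the lattice L(M) *)
definition closedSets :: "'a set \<Rightarrow> ('a \<times> 'a) set \<Rightarrow> 'a set set" where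
  "closedSets U R = {X. X \<subseteq> U \<and> clM U R X = X}"

definition h1 :: "'a set \<Rightarrow> ('a \<times> 'a) set \<Rightarrow> 'a set \<Rightarrow> nat" where
  "h1 U R X = height_in (closedSets U R) (clM U R {}) X"

end

theory Submission
  imports Defs
begin

(* Call t \<in> U terminal if every R-successor of t is again a predecessor of t.
   For a serial transitive R on a finite U every element sees some terminal element, and the
   terminal elements fall into clusters of mutually related elements; choose one
   representative per cluster, giving a finite set P.  The operator LU = lower \<circ> upper only
   records which terminal clusters a set reaches, so X \<mapsto> P \<inter> X and S \<mapsto> LU S are mutually
   inverse order isomorphisms between Reg(U,R) and the powerset of P; hence h(X) = |P \<inter> X|.
   In the matroid M(Reg(U,R)) the rank of a regular X is at most |P \<inter> X| (every independent
   subset of X meets X in at most h(X) points), while for u \<notin> X the set insert u (P \<inter> X) is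
   independent, so X is closed.  Since rank strictly increases along chains of closed sets,
   h_1(X) \<le> |P \<inter> X|, and the chain through Reg(U,R) realizes this bound. *)

lemma strict_chain_le_last:
  assumes "sorted_wrt (\<subset>) cs" "c \<in> set cs"
  shows "c \<subseteq> last cs"
proof -
  have split: "cs = butlast cs @ [last cs]"
    using assms(2) by (intro append_butlast_last_id[symmetric]) auto
  then have "\<forall>x\<in>set (butlast cs). x \<subset> last cs"
    using assms(1) sorted_wrt_append[of "(\<subset>)" "butlast cs" "[last cs]"] by simp
  moreover have "c \<in> set (butlast cs) \<or> c = last cs"
    using assms(2) by (subst (asm) split) auto
  ultimately show ?thesis by blast
qed

lemma strict_mono_chain_bound:
  fixes g :: "'b set \<Rightarrow> nat"
  assumes "sorted_wrt (\<subset>) cs" "set cs \<subseteq> Q" "cs \<noteq> []"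
    and mono: "\<And>a b. a \<in> Q \<Longrightarrow> b \<in> Q \<Longrightarrow> a \<subset> b \<Longrightarrow> g a < g b"
  shows "g (hd cs) + (length cs - 1) \<le> g (last cs)"
  using assms(1-3)
proof (induction cs)
  case Nil
  then show ?case by simp
next
  case (Cons x xs)
  show ?case
  proof (cases "xs = []")
    case True
    then show ?thesis by simp
  next
    case False
    have ih: "g (hd xs) + (length xs - 1) \<le> g (last xs)"
      using Cons False by simp
    have "hd xs \<in> set xs" using False by simp
    then have "g x < g (hd xs)" using Cons.prems(1,2) mono by auto
    then show ?thesis using ih False by (cases xs) auto
  qed
qed

lemma height_in_eqI:
  fixes g :: "'b set \<Rightarrow> nat"
  assumes mono: "\<And>x y. x \<in> Q \<Longrightarrow> y \<in> Q \<Longrightarrow> x \<subset> y \<Longrightarrow> g x < g y"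
    and bound: "g a \<le> g b + n"
    and witness: "chain_from_to Q b a cs0" "length cs0 - 1 = n"
  shows "height_in Q b a = n"
proof -
  have le: "length cs - 1 \<le> n" if "chain_from_to Q b a cs" for cs
  proof -
    have "g (hd cs) + (length cs - 1) \<le> g (last cs)"
      using that mono unfolding chain_from_to_def by (intro strict_mono_chain_bound) auto
    then show ?thesis using that bound unfolding chain_from_to_def by simp
  qed
  show ?thesis
    unfolding height_in_def
  proof (rule Max_eqI)
    show "finite {length cs - 1 |cs. chain_from_to Q b a cs}"
      by (rule finite_subset[of _ "{..n}"]) (auto dest: le)
  qed (use witness le in auto)
qed

lemma rank_candidates_finite:
  assumes "finite U"
  shows "finite {card I | I. I \<subseteq> X \<and> indepM U R I}"
  by (rule finite_subset[of _ "{..card U}"])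
     (auto simp: indepM_def intro: card_mono[OF assms])

lemma rank_ge:
  assumes "finite U" "I \<subseteq> X" "indepM U R I"
  shows "card I \<le> rankM U R X"
  unfolding rankM_def using assms by (intro Max_ge[OF rank_candidates_finite]) auto

lemma rank_le:
  assumes "finite U" "\<And>I. I \<subseteq> X \<Longrightarrow> indepM U R I \<Longrightarrow> card I \<le> n"
  shows "rankM U R X \<le> n"
proof -
  have "indepM U R {}" unfolding indepM_def by auto
  then show ?thesis
    unfolding rankM_def using assms rank_candidates_finite[OF assms(1)]
    by (intro Max.boundedI) auto
qed

lemma rank_mono:
  assumes "finite U" "X \<subseteq> X'"
  shows "rankM U R X \<le> rankM U R X'"
proof (rule rank_le[OF assms(1)])
  fix I assume "I \<subseteq> X" "indepM U R I"
  then show "card I \<le> rankM U R X'" using assms by (intro rank_ge) auto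
qed

lemma closed_rank_strict:
  assumes "finite U" "A \<in> closedSets U R" "B \<in> closedSets U R" "A \<subset> B"
  shows "rankM U R A < rankM U R B"
proof -
  obtain b where b: "b \<in> B" "b \<notin> A" using assms(4) by blast
  have "b \<in> U" using assms(3) b unfolding closedSets_def by auto
  moreover have "b \<notin> clM U R A" using assms(2) b unfolding closedSets_def by auto
  ultimately have "rankM U R (A \<union> {b}) \<noteq> rankM U R A" unfolding clM_def by auto
  moreover have "rankM U R A \<le> rankM U R (A \<union> {b})" using assms(1) by (rule rank_mono) auto
  moreover have "rankM U R (A \<union> {b}) \<le> rankM U R B"
    using assms(1) b assms(4) by (intro rank_mono) auto
  ultimately show ?thesis by linarith
qed

section \<open>Serial transitive relations: terminal elements and regular sets\<close>

locale serial_trans =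
  fixes U :: "'a set" and R :: "('a \<times> 'a) set"
  assumes finite_U: "finite U" and R_on_U: "R \<subseteq> U \<times> U"
    and serial: "serial_on U R" and transitive: "trans R"
begin

abbreviation LU :: "'a set \<Rightarrow> 'a set" where
  "LU Z \<equiv> lower_approx U R (upper_approx U R Z)"

(* t is terminal if it lies in a final cluster: all its successors see it again. *)
definition terminal :: "'a \<Rightarrow> bool" where
  "terminal t \<longleftrightarrow> t \<in> U \<and> (\<forall>s. (t, s) \<in> R \<longrightarrow> (s, t) \<in> R)"

lemma succ_set_iff: "y \<in> succ_set U R x \<longleftrightarrow> (x, y) \<in> R"
  using R_on_U unfolding succ_set_def by auto

lemma R_trans: "(x, y) \<in> R \<Longrightarrow> (y, z) \<in> R \<Longrightarrow> (x, z) \<in> R"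
  using transitive unfolding trans_def by blast

(* Seriality makes terminal elements reflexive. *)
lemma terminal_refl:
  assumes "terminal t"
  shows "(t, t) \<in> R"
proof -
  obtain s where s: "(t, s) \<in> R" using assms serial unfolding terminal_def serial_on_def by blast
  then have "(s, t) \<in> R" using assms unfolding terminal_def by blast
  then show ?thesis using s R_trans by blast
qed

lemma terminal_succ:
  assumes "terminal t" "(t, s) \<in> R"
  shows "terminal s" and "(s, w) \<in> R \<longleftrightarrow> (t, w) \<in> R"
proof -
  have st: "(s, t) \<in> R" using assms unfolding terminal_def by auto
  show "(s, w) \<in> R \<longleftrightarrow> (t, w) \<in> R" using st assms(2) R_trans by blast
  show "terminal s" unfolding terminal_def
  proof (intro conjI allI impI)
    show "s \<in> U" using assms(2) R_on_U by auto
    fix w assume "(s, w) \<in> R"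
    then have "(t, w) \<in> R" using assms(2) R_trans by blast
    then have "(w, t) \<in> R" using assms(1) unfolding terminal_def by blast
    then show "(w, s) \<in> R" using assms(2) R_trans by blast
  qed
qed

(* Take a successor y of x whose
   successor set is smallest; all successors of y then have the same successor set as y,
   and any successor of y is terminal. *)
lemma exists_terminal_succ:
  assumes "x \<in> U"
  shows "\<exists>t. terminal t \<and> (x, t) \<in> R"
proof -
  obtain y0 where "(x, y0) \<in> R" using serial assms unfolding serial_on_def by auto
  then obtain y where xy: "(x, y) \<in> R"
    and y_min: "\<And>z. (x, z) \<in> R \<Longrightarrow> card (succ_set U R y) \<le> card (succ_set U R z)"
    using ex_has_least_nat[of "\<lambda>z. (x, z) \<in> R" y0 "\<lambda>z. card (succ_set U R z)"] by blast
  have same_succ: "succ_set U R z = succ_set U R y" if "(y, z) \<in> R" for z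
  proof (rule card_seteq)
    show "finite (succ_set U R y)" using finite_U unfolding succ_set_def by auto
    show "succ_set U R z \<subseteq> succ_set U R y" using that succ_set_iff R_trans by blast
    show "card (succ_set U R y) \<le> card (succ_set U R z)" using that xy R_trans y_min by blast
  qed
  obtain t where yt: "(y, t) \<in> R"
    using serial xy R_on_U unfolding serial_on_def by blast
  have "terminal t" unfolding terminal_def
  proof (intro conjI allI impI)
    show "t \<in> U" using yt R_on_U by auto
    fix s assume "(t, s) \<in> R"
    then have "succ_set U R s = succ_set U R y" using yt R_trans same_succ by blast
    then show "(s, t) \<in> R" using yt succ_set_iff by blast
  qed
  then show ?thesis using xy yt R_trans by blast
qed

lemma LU_iff:
  "x \<in> LU Z \<longleftrightarrow> x \<in> U \<and> (\<forall>t. terminal t \<and> (x, t) \<in> R \<longrightarrow> (\<exists>z\<in>Z. (t, z) \<in> R))"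
proof -
  have LU_direct: "x \<in> LU Z \<longleftrightarrow> x \<in> U \<and> (\<forall>y. (x, y) \<in> R \<longrightarrow> (\<exists>z\<in>Z. (y, z) \<in> R))"
    unfolding lower_approx_def upper_approx_def succ_set_def using R_on_U by blast
  have "\<exists>z\<in>Z. (y, z) \<in> R"
    if "\<forall>t. terminal t \<and> (x, t) \<in> R \<longrightarrow> (\<exists>z\<in>Z. (t, z) \<in> R)" "(x, y) \<in> R" for y
  proof -
    obtain t where "terminal t" "(y, t) \<in> R"
      using exists_terminal_succ \<open>(x, y) \<in> R\<close> R_on_U by blast
    then show ?thesis using that R_trans by blast
  qed
  then show ?thesis using LU_direct by blast
qed

lemma LU_cong:
  assumes "\<And>t. terminal t \<Longrightarrow> (\<exists>z\<in>Z. (t, z) \<in> R) \<longleftrightarrow> (\<exists>z\<in>Z'. (t, z) \<in> R)"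
  shows "LU Z = LU Z'"
  using assms unfolding set_eq_iff LU_iff by blast

lemma terminal_in_LU:
  "terminal t \<Longrightarrow> t \<in> LU Z \<longleftrightarrow> (\<exists>z\<in>Z. (t, z) \<in> R)"
  unfolding LU_iff using terminal_refl terminal_succ terminal_def by metis

lemma LU_idem: "LU (LU Z) = LU Z"
proof (rule LU_cong)
  fix t assume t: "terminal t"
  show "(\<exists>z\<in>LU Z. (t, z) \<in> R) \<longleftrightarrow> (\<exists>z\<in>Z. (t, z) \<in> R)"
    using terminal_in_LU terminal_succ[OF t] terminal_refl[OF t] t R_trans by meson
qed

lemma LU_mono: "Z \<subseteq> Z' \<Longrightarrow> LU Z \<subseteq> LU Z'"
  using LU_iff by blast

lemma LU_in_Reg: "LU Z \<in> Reg U R"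
  unfolding Reg_def using LU_idem LU_iff by auto

lemma Reg_LU: "Y \<in> Reg U R \<Longrightarrow> LU Y = Y"
  unfolding Reg_def by auto

lemma LU_empty: "LU {} = {}"
  using LU_iff exists_terminal_succ by blast

lemma terminal_in_Reg:
  "Y \<in> Reg U R \<Longrightarrow> terminal t \<Longrightarrow> t \<in> Y \<longleftrightarrow> (\<exists>z\<in>Y. (t, z) \<in> R)"
  using terminal_in_LU Reg_LU by metis

(* The representative of a terminal t depends only on the successor set of t, i.e. on its
   cluster. *)
definition rep :: "'a \<Rightarrow> 'a" where
  "rep t = (SOME p. (t, p) \<in> R)"

definition reps :: "'a set" where
  "reps = {t. terminal t \<and> rep t = t}"

lemma rep_succ: "terminal t \<Longrightarrow> (t, rep t) \<in> R"
  unfolding rep_def using terminal_refl by (rule someI)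

lemma rep_cong:
  assumes "\<And>w. (s, w) \<in> R \<longleftrightarrow> (t, w) \<in> R"
  shows "rep s = rep t"
proof -
  have "(\<lambda>p. (s, p) \<in> R) = (\<lambda>p. (t, p) \<in> R)" using assms by (rule ext)
  then show ?thesis unfolding rep_def by simp
qed

lemma reps_terminal: "p \<in> reps \<Longrightarrow> terminal p"
  unfolding reps_def by auto

lemma finite_reps: "finite reps"
  using finite_U by (rule finite_subset[rotated]) (auto simp: reps_def terminal_def)

lemma reps_unique:
  assumes p: "p \<in> reps" and q: "q \<in> reps" and pq: "(p, q) \<in> R"
  shows "p = q"
proof -
  have "rep q = rep p" using terminal_succ(2)[OF reps_terminal[OF p] pq] by (rule rep_cong)
  then show ?thesis using p q unfolding reps_def by auto
qed

lemma reps_cover: "terminal t \<Longrightarrow> \<exists>p\<in>reps. (t, p) \<in> R"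
proof -
  assume t: "terminal t"
  have tp: "(t, rep t) \<in> R" using rep_succ t .
  have "rep (rep t) = rep t" using terminal_succ(2)[OF t tp] by (rule rep_cong)
  then show ?thesis using tp terminal_succ(1)[OF t tp] unfolding reps_def by auto
qed

section \<open>Reg(U,R) is isomorphic to the powerset of the representatives\<close>

lemma LU_reps_Int:
  assumes Y: "Y \<in> Reg U R"
  shows "LU (reps \<inter> Y) = Y"
proof -
  have "LU (reps \<inter> Y) = LU Y"
  proof (rule LU_cong)
    fix t assume t: "terminal t"
    show "(\<exists>z\<in>reps \<inter> Y. (t, z) \<in> R) \<longleftrightarrow> (\<exists>z\<in>Y. (t, z) \<in> R)"
    proof
      assume "\<exists>z\<in>Y. (t, z) \<in> R"
      then obtain z where z: "z \<in> Y" "(t, z) \<in> R" by blast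
      have z_term: "terminal z" using terminal_succ t z by blast
      then obtain p where p: "p \<in> reps" "(z, p) \<in> R" using reps_cover by blast
      have "(p, z) \<in> R" using z_term p unfolding terminal_def by auto
      then have "p \<in> Y" using terminal_in_Reg[OF Y reps_terminal[OF p(1)]] z by blast
      then show "\<exists>z\<in>reps \<inter> Y. (t, z) \<in> R" using p z R_trans by blast
    qed blast
  qed
  then show ?thesis using Reg_LU Y by simp
qed

lemma reps_Int_LU:
  assumes "S \<subseteq> reps"
  shows "reps \<inter> LU S = S"
proof -
  have "p \<in> LU S \<longleftrightarrow> p \<in> S" if p: "p \<in> reps" for p
  proof -
    have "p \<in> LU S \<longleftrightarrow> (\<exists>z\<in>S. (p, z) \<in> R)"
      using terminal_in_LU reps_terminal p by blast
    also have "\<dots> \<longleftrightarrow> p \<in> S"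
      using reps_unique p assms terminal_refl reps_terminal by blast
    finally show ?thesis .
  qed
  then show ?thesis using assms by blast
qed

lemma Reg_card_strict:
  assumes A: "A \<in> Reg U R" and B: "B \<in> Reg U R" and AB: "A \<subset> B"
  shows "card (reps \<inter> A) < card (reps \<inter> B)"
proof -
  have "reps \<inter> A \<noteq> reps \<inter> B"
  proof
    assume "reps \<inter> A = reps \<inter> B"
    then have "A = B" using LU_reps_Int[OF A] LU_reps_Int[OF B] by metis
    then show False using AB by simp
  qed
  then have "reps \<inter> A \<subset> reps \<inter> B" using AB by blast
  then show ?thesis using finite_reps by (meson finite_Int psubset_card_mono)
qed

lemma Reg_chain_exists:
  assumes "finite S" "S \<subseteq> reps"
  shows "\<exists>cs. chain_from_to (Reg U R) {} (LU S) cs \<and> length cs - 1 = card S"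
  using assms
proof (induction S rule: finite_induct)
  case empty
  have "{} \<in> Reg U R" using LU_in_Reg LU_empty by metis
  then show ?case using LU_empty by (intro exI[of _ "[{}]"]) (auto simp: chain_from_to_def)
next
  case (insert p S)
  then obtain cs where cs: "chain_from_to (Reg U R) {} (LU S) cs" "length cs - 1 = card S"
    by auto
  have "LU S \<subset> LU (insert p S)"
  proof -
    have "LU S \<subseteq> LU (insert p S)" by (rule LU_mono) auto
    moreover have "p \<in> LU (insert p S)" "p \<notin> LU S"
      using reps_Int_LU[of "insert p S"] reps_Int_LU[of S] insert by auto
    ultimately show ?thesis by blast
  qed
  then have "\<forall>c\<in>set cs. c \<subset> LU (insert p S)"
    using strict_chain_le_last cs unfolding chain_from_to_def by blast
  then have "chain_from_to (Reg U R) {} (LU (insert p S)) (cs @ [LU (insert p S)])"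
    using cs LU_in_Reg unfolding chain_from_to_def by (auto simp: sorted_wrt_append)
  moreover have "length (cs @ [LU (insert p S)]) - 1 = card (insert p S)"
    using cs insert unfolding chain_from_to_def by (cases cs) auto
  ultimately show ?case by blast
qed

lemma Reg_chain_to:
  assumes "Y \<in> Reg U R"
  obtains cs where "chain_from_to (Reg U R) {} Y cs" "length cs - 1 = card (reps \<inter> Y)"
  using Reg_chain_exists[of "reps \<inter> Y"] finite_reps LU_reps_Int[OF assms] by auto

lemma hReg_eq_card:
  assumes Y: "Y \<in> Reg U R"
  shows "hReg U R Y = card (reps \<inter> Y)"
proof -
  obtain cs where "chain_from_to (Reg U R) {} Y cs" "length cs - 1 = card (reps \<inter> Y)"
    using Reg_chain_to Y by blast
  then show ?thesis
    unfolding hReg_def using Reg_card_strict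
    by (intro height_in_eqI[where g = "\<lambda>A. card (reps \<inter> A)"]) auto
qed

section \<open>Regular sets in the matroid\<close>

lemma Reg_rank_le:
  assumes X: "X \<in> Reg U R"
  shows "rankM U R X \<le> card (reps \<inter> X)"
proof (rule rank_le[OF finite_U])
  fix I assume "I \<subseteq> X" "indepM U R I"
  then have "card (I \<inter> X) \<le> hReg U R X" and "I \<inter> X = I"
    using X unfolding indepM_def by blast+
  then show "card I \<le> card (reps \<inter> X)" using hReg_eq_card[OF X] by simp
qed

(* For a regular X and u \<notin> X, the set insert u (reps \<inter> X) is independent: a regular Y
   containing u also contains a representative outside X, which compensates for u. *)
lemma Reg_extend_indep:
  assumes X: "X \<in> Reg U R" and u: "u \<in> U" "u \<notin> X"
  shows "indepM U R (insert u (reps \<inter> X))"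
  unfolding indepM_def
proof (intro conjI ballI)
  show "insert u (reps \<inter> X) \<subseteq> U" using u reps_terminal unfolding terminal_def by auto
  fix Y assume Y: "Y \<in> Reg U R"
  show "card (insert u (reps \<inter> X) \<inter> Y) \<le> hReg U R Y"
  proof (cases "u \<in> Y")
    case False
    then have "insert u (reps \<inter> X) \<inter> Y \<subseteq> reps \<inter> Y" by auto
    then show ?thesis using hReg_eq_card Y finite_reps by (simp add: card_mono)
  next
    case True
    have "u \<notin> LU X" using Reg_LU X u by simp
    then obtain t where t: "terminal t" "(u, t) \<in> R" "\<not> (\<exists>z\<in>X. (t, z) \<in> R)"
      using LU_iff u by blast
    obtain p where p: "p \<in> reps" "(t, p) \<in> R" using reps_cover t by blast
    have p_notin_X: "p \<notin> X" using p t by blast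
    have "u \<in> LU Y" using Reg_LU Y True by simp
    then obtain z where z: "z \<in> Y" "(t, z) \<in> R" using LU_iff t by blast
    have "(p, z) \<in> R" using terminal_succ(2)[OF t(1) p(2)] z by blast
    then have p_in_Y: "p \<in> Y" using terminal_in_Reg[OF Y reps_terminal[OF p(1)]] z by blast
    have "card (insert u (reps \<inter> X) \<inter> Y) \<le> card (insert u (reps \<inter> Y - {p}))"
      using p_notin_X finite_reps by (intro card_mono) auto
    also have "\<dots> \<le> Suc (card (reps \<inter> Y - {p}))" by (rule card_insert_le_m1) simp_all
    also have "\<dots> = card (reps \<inter> Y)" using p_in_Y p finite_reps
      by (metis IntI card_Suc_Diff1 finite_Int)
    finally show ?thesis using hReg_eq_card Y by simp
  qed
qed

lemma Reg_closed:
  assumes X: "X \<in> Reg U R"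
  shows "X \<in> closedSets U R"
proof -
  have XU: "X \<subseteq> U" using X unfolding Reg_def by auto
  have "u \<in> X" if u: "u \<in> U" "rankM U R (X \<union> {u}) = rankM U R X" for u
  proof (rule ccontr)
    assume "u \<notin> X"
    then have "card (insert u (reps \<inter> X)) \<le> rankM U R (X \<union> {u})"
      using Reg_extend_indep[OF X u(1)] by (intro rank_ge[OF finite_U]) auto
    moreover have "card (insert u (reps \<inter> X)) = card (reps \<inter> X) + 1"
      using \<open>u \<notin> X\<close> finite_reps by simp
    ultimately show False using u Reg_rank_le[OF X] by simp
  qed
  then have "clM U R X = X" using XU unfolding clM_def by (auto simp: insert_absorb)
  then show ?thesis using XU unfolding closedSets_def by auto
qed

lemma h1_eq_card:
  assumes X: "X \<in> Reg U R"
  shows "h1 U R X = card (reps \<inter> X)"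
proof -
  have cl_empty: "clM U R {} = {}"
    using Reg_closed[of "{}"] LU_in_Reg[of "{}"] LU_empty unfolding closedSets_def by auto
  obtain cs where cs: "chain_from_to (Reg U R) {} X cs" "length cs - 1 = card (reps \<inter> X)"
    using Reg_chain_to X by blast
  then have "chain_from_to (closedSets U R) {} X cs"
    using Reg_closed unfolding chain_from_to_def by auto
  then show ?thesis
    unfolding h1_def cl_empty using cs(2) Reg_rank_le[OF X] closed_rank_strict[OF finite_U]
    by (intro height_in_eqI[where g = "rankM U R"]) auto
qed

end

theorem mainTheorem10:
  fixes U :: "'a set" and R :: "('a \<times> 'a) set"
  assumes "finite U" and "U \<noteq> {}"
    and "R \<subseteq> U \<times> U"
    and "serial_on U R" and "trans R"
  shows "\<forall>X \<in> Reg U R. X \<in> closedSets U R \<and> hReg U R X = h1 U R X"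
proof -
  interpret serial_trans U R using assms by unfold_locales auto
  show ?thesis using Reg_closed hReg_eq_card h1_eq_card by auto
qed

end
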